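(* Let $\varphi_A(X):=\sum_{i=1}^nA_iXA_i^*$ ($n\in\mathbb N$ or $n=\infty$) be a $w^*$-continuous completely positive linear map on $B(\mathcal H)$, and assume there is a positive operator $X\in B(\mathcal H)$, $X\ne0$, with $\varphi_A(X)\le X$. If one of the following holds, then there is a nontrivial subspace of $\mathcal H$ invariant under every $A_i$, $i=1,\dots,n$: (i) $X$ is not injective; (ii) $X$ is not pure with respect to $\varphi_A$ (i.e. $\varphi_A^k(X)$ does not converge strongly to $0$) and there is $h\in\mathcal H$, $h\ne0$, with $\lim_{k\to\infty}\varphi_A^k(X)h=0$; (iii) $\varphi_A(X)\ne X$ and the orbit of $X$ under $\varphi_A$ has a nonzero fixed point, i.e. there is $h\ne0$ with $\varphi_A^k(X)h=Xh$ for all $k=1,2,\dots$. *)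

theory Defs
  imports "HOL-Analysis.Analysis"
begin

class complex_inner = real_normed_vector +
  fixes scaleC :: "complex \<Rightarrow> 'a \<Rightarrow> 'a"
    and cinner :: "'a \<Rightarrow> 'a \<Rightarrow> complex"
  assumes scaleC_add_right: "scaleC c (x + y) = scaleC c x + scaleC c y"
    and scaleC_add_left: "scaleC (c + d) x = scaleC c x + scaleC d x"
    and scaleC_scaleC: "scaleC c (scaleC d x) = scaleC (c * d) x"
    and scaleC_one: "scaleC 1 x = x"
    and scaleR_scaleC: "scaleR r x = scaleC (complex_of_real r) x"
    and cinner_commute: "cinner x y = cnj (cinner y x)"
    and cinner_add_left: "cinner (x + y) z = cinner x z + cinner y z"
    and cinner_scaleC_left: "cinner (scaleC c x) y = c * cinner x y"
    and cinner_nonneg: "0 \<le> Re (cinner x x)"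
    and cinner_eq_zero_iff: "cinner x x = 0 \<longleftrightarrow> x = 0"
    and norm_eq_sqrt_cinner: "norm x = sqrt (Re (cinner x x))"

class chilbert = complex_inner + complete_space

definition bounded_clinear :: "('a::complex_inner \<Rightarrow> 'b::complex_inner) \<Rightarrow> bool" where
  "bounded_clinear f \<longleftrightarrow> bounded_linear f \<and> (\<forall>c x. f (scaleC c x) = scaleC c (f x))"

definition adj :: "('a::complex_inner \<Rightarrow> 'a) \<Rightarrow> ('a \<Rightarrow> 'a)" where
  "adj A = (THE B. \<forall>x y. cinner (A x) y = cinner x (B y))"

definition positive_op :: "('a::complex_inner \<Rightarrow> 'a) \<Rightarrow> bool" where
  "positive_op X \<longleftrightarrow> bounded_clinear X \<and>
     (\<forall>h. Im (cinner (X h) h) = 0 \<and> 0 \<le> Re (cinner (X h) h))"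

definition op_le :: "('a::complex_inner \<Rightarrow> 'a) \<Rightarrow> ('a \<Rightarrow> 'a) \<Rightarrow> bool" where
  "op_le X Y \<longleftrightarrow> positive_op (\<lambda>h. Y h - X h)"

text \<open>Complex linear subspaces; "subspace" in the invariant subspace problem means
  closed linear subspace.\<close>
definition csubspace :: "'a::complex_inner set \<Rightarrow> bool" where
  "csubspace S \<longleftrightarrow> 0 \<in> S \<and> (\<forall>x\<in>S. \<forall>y\<in>S. x + y \<in> S) \<and> (\<forall>c. \<forall>x\<in>S. scaleC c x \<in> S)"

definition closed_csubspace :: "'a::complex_inner set \<Rightarrow> bool" where
  "closed_csubspace S \<longleftrightarrow> csubspace S \<and> closed S"

text \<open>The completely positive map \<open>\<phi>_A(X) = \<Sum>_{i\<in>I} A_i X A_i^*\<close>, the series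
  converging in the strong operator topology (pointwise, unconditionally).\<close>
definition phiA :: "(nat \<Rightarrow> 'a::complex_inner \<Rightarrow> 'a) \<Rightarrow> nat set \<Rightarrow> ('a \<Rightarrow> 'a) \<Rightarrow> ('a \<Rightarrow> 'a)" where
  "phiA A I X = (\<lambda>h. \<Sum>\<^sub>\<infinity>i\<in>I. A i (X (adj (A i) h)))"

end

(* Each hypothesis produces a closed subspace M, neither {0} nor the whole space, that is
   mapped into itself by every adjoint A_i^*; the orthogonal complement of M is then invariant
   under every A_i.  With X_k = phi_A^k(X) and Q_k(h) = <X_k h, h>, superharmonicity makes the
   X_k a decreasing sequence of positive operators, and

     sum_i Q_k(A_i^* h) = Q_(k+1)(h) <= Q_k(h).

   Every summand is thus dominated by Q_(k+1)(h), so A_i^* preserves the kernel of X and the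
   vectors h with X_k h -> 0; for vectors fixed by all X_k the nonnegative defects
   Q_0(A_i^* h) - Q_k(A_i^* h) have sum zero, so A_i^* preserves those as well.  That phi_A maps
   bounded operators to bounded operators is itself not free: Baire's theorem turns the
   pointwise summability of sum_i A_i A_i^* h into a uniform bound. *)

theory Submission
  imports Defs
begin

section \<open>Complex inner product spaces\<close>

lemma cinner_zero_left [simp]: "cinner 0 y = 0"
  for y :: "'a::complex_inner"
  using cinner_add_left[of 0 0 y] by simp

lemma cinner_zero_right [simp]: "cinner x 0 = 0"
  for x :: "'a::complex_inner"
  by (metis cinner_commute cinner_zero_left complex_cnj_zero)

lemma cinner_minus_left: "cinner (- x) y = - cinner x y"
  for x :: "'a::complex_inner"
  using minus_unique[of "cinner x y"] cinner_add_left[of x "-x" y] by simp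

lemma cinner_diff_left: "cinner (x - y) z = cinner x z - cinner y z"
  for x :: "'a::complex_inner"
  using cinner_add_left[of x "-y" z] cinner_minus_left[of y z] by simp

lemma cinner_add_right: "cinner x (y + z) = cinner x y + cinner x z"
  for x :: "'a::complex_inner"
  by (metis cinner_commute cinner_add_left complex_cnj_add)

lemma cinner_diff_right: "cinner x (y - z) = cinner x y - cinner x z"
  for x :: "'a::complex_inner"
  by (metis cinner_commute cinner_diff_left complex_cnj_diff)

lemma cinner_scaleC_right: "cinner x (scaleC c y) = cnj c * cinner x y"
  for x :: "'a::complex_inner"
  by (metis cinner_commute cinner_scaleC_left complex_cnj_mult)

lemma cinner_scaleR_left: "cinner (scaleR r x) y = of_real r * cinner x y"
  for x :: "'a::complex_inner"
  by (simp add: scaleR_scaleC cinner_scaleC_left)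

lemma cinner_scaleR_right: "cinner x (scaleR r y) = of_real r * cinner x y"
  for x :: "'a::complex_inner"
  by (simp add: scaleR_scaleC cinner_scaleC_right)

lemma cinner_sum_left: "cinner (sum f F) y = (\<Sum>i\<in>F. cinner (f i) y)"
  for y :: "'a::complex_inner"
  by (induction F rule: infinite_finite_induct) (auto simp: cinner_add_left)

lemma scaleC_zero_right [simp]: "scaleC c 0 = (0::'a::complex_inner)"
  using scaleC_add_right[of c 0 0] by simp

lemma scaleC_zero_left [simp]: "scaleC 0 x = (0::'a::complex_inner)"
  by (metis scaleR_zero_left scaleR_scaleC of_real_0)

lemma scaleC_minus_right: "scaleC c (- x) = - scaleC c x"
  for x :: "'a::complex_inner"
  using minus_unique[of "scaleC c x"] scaleC_add_right[of c x "-x"] by simp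

lemma scaleC_minus_left: "scaleC (- c) x = - scaleC c x"
  for x :: "'a::complex_inner"
  using minus_unique[of "scaleC c x"] scaleC_add_left[of c "-c" x] by simp

lemma scaleC_diff_right: "scaleC c (x - y) = scaleC c x - scaleC c y"
  for x :: "'a::complex_inner"
  using scaleC_add_right[of c x "-y"] scaleC_minus_right[of c y] by simp

lemma cinner_self_eq_norm_power2: "cinner x x = complex_of_real ((norm x)^2)"
  for x :: "'a::complex_inner"
proof -
  have "Im (cinner x x) = 0"
    using arg_cong[OF cinner_commute[of x x], of Im] by simp
  then show ?thesis
    using cinner_nonneg[of x] norm_eq_sqrt_cinner[of x] by (simp add: complex_eq_iff)
qed

lemma power2_norm_eq_cinner: "(norm x)^2 = Re (cinner x x)"
  for x :: "'a::complex_inner"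
  by (simp add: cinner_self_eq_norm_power2)

lemma power2_norm_diff_scaleC:
  fixes x y :: "'a::complex_inner"
  shows "(norm (x - scaleC s y))^2
    = (norm x)^2 - 2 * Re (cnj s * cinner x y) + (cmod s)^2 * (norm y)^2"
proof -
  have "(norm (x - scaleC s y))^2 = Re (cinner (x - scaleC s y) (x - scaleC s y))"
    by (rule power2_norm_eq_cinner)
  also have "cinner (x - scaleC s y) (x - scaleC s y)
      = cinner x x - cnj s * cinner x y - s * cinner y x + s * cnj s * cinner y y"
    by (simp add: cinner_diff_left cinner_diff_right cinner_scaleC_left cinner_scaleC_right
        algebra_simps)
  also have "s * cinner y x = cnj (cnj s * cinner x y)"
    by (metis cinner_commute complex_cnj_cnj complex_cnj_mult)
  finally show ?thesis
    by (simp add: cinner_self_eq_norm_power2 complex_mult_cnj cmod_power2)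
qed

lemma norm_scaleC: "norm (scaleC c x) = cmod c * norm x"
  for x :: "'a::complex_inner"
proof -
  have "cinner (scaleC c x) (scaleC c x) = c * cnj c * cinner x x"
    by (simp add: cinner_scaleC_left cinner_scaleC_right mult.assoc)
  then have "(norm (scaleC c x))^2 = (cmod c)^2 * (norm x)^2"
    unfolding power2_norm_eq_cinner
    by (simp only: cinner_self_eq_norm_power2 complex_norm_square[symmetric] of_real_mult[symmetric]
        Re_complex_of_real)
  then have "(norm (scaleC c x))^2 = (cmod c * norm x)^2"
    by (simp add: power_mult_distrib)
  then show ?thesis by simp
qed

lemma parallelogram_law:
  fixes u v :: "'a::complex_inner"
  shows "(norm (u + v))^2 + (norm (u - v))^2 = 2 * (norm u)^2 + 2 * (norm v)^2"
proof -
  have "(norm (u - v))^2 = (norm u)^2 - 2 * Re (cinner u v) + (norm v)^2"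
    using power2_norm_diff_scaleC[of u 1 v] by (simp add: scaleC_one)
  moreover have "(norm (u + v))^2 = (norm u)^2 + 2 * Re (cinner u v) + (norm v)^2"
    using power2_norm_diff_scaleC[of u "-1" v] by (simp add: scaleC_one scaleC_minus_left)
  ultimately show ?thesis by simp
qed

lemma power2_norm_diff_le: "(norm (a - b))^2 \<le> 2 * (norm a)^2 + 2 * (norm b)^2"
  for a b :: "'a::complex_inner"
  using parallelogram_law[of a b] zero_le_power2[of "norm (a + b)"] by linarith

lemma power2_norm_diff_scaleC_cinner:
  fixes x y :: "'a::complex_inner"
  shows "(norm (x - scaleC (of_real t * cinner x y) y))^2 =
    (norm x)^2 - 2 * (cmod (cinner x y))^2 * t + (cmod (cinner x y))^2 * (norm y)^2 * t^2"
proof -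
  let ?c = "cinner x y"
  have re: "cnj (of_real t * ?c) * ?c = of_real (t * (cmod ?c)^2)"
    by (simp only: complex_cnj_mult complex_cnj_complex_of_real complex_norm_square of_real_mult)
      (simp add: mult_ac)
  have abs: "(cmod (of_real t * ?c))^2 = t^2 * (cmod ?c)^2"
    by (simp add: norm_mult power_mult_distrib)
  show ?thesis
    unfolding power2_norm_diff_scaleC re abs Re_complex_of_real by (simp add: algebra_simps)
qed

lemma discriminant_le_if_quadratic_nonneg:
  fixes a b c :: real
  assumes "\<And>t. 0 \<le> a - 2 * b * t + c * t^2" "0 \<le> c"
  shows "b^2 \<le> a * c"
proof (cases "c = 0")
  case True
  show ?thesis
  proof (rule ccontr)
    assume "\<not> ?thesis"
    then have "b \<noteq> 0" using True by simp
    have "0 \<le> a - 2 * b * ((a + 1) / (2 * b))" using assms(1)[of "(a + 1) / (2 * b)"] True by simp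
    also have "\<dots> = -1" using \<open>b \<noteq> 0\<close> by (simp add: field_simps)
    finally show False by simp
  qed
next
  case False
  then have c: "c > 0" using assms(2) by simp
  have "0 \<le> a - 2 * b * (b / c) + c * (b / c)^2" by (rule assms(1))
  also have "\<dots> = a - b^2 / c" using c by (simp add: field_simps power2_eq_square)
  finally show ?thesis using c by (simp add: field_simps)
qed

lemma Cauchy_Schwarz_cinner: "cmod (cinner x y) \<le> norm x * norm y"
  for x :: "'a::complex_inner"
proof -
  let ?c = "(cmod (cinner x y))^2"
  have "0 \<le> (norm x)^2 - 2 * ?c * t + ?c * (norm y)^2 * t^2" for t
    using zero_le_power2[of "norm (x - scaleC (of_real t * cinner x y) y)"]
    unfolding power2_norm_diff_scaleC_cinner .
  from discriminant_le_if_quadratic_nonneg[OF this]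
  have le: "?c * ?c \<le> ?c * ((norm x)^2 * (norm y)^2)"
    by (simp add: power2_eq_square mult_ac)
  have "?c \<le> (norm x * norm y)^2"
  proof (cases "?c = 0")
    case False
    then have "0 < ?c" by simp
    with mult_left_le_imp_le[OF le] show ?thesis by (simp add: power_mult_distrib)
  qed simp
  then show ?thesis
    by (rule power2_le_imp_le) simp
qed

lemma bounded_linear_cinner_left: "bounded_linear (\<lambda>x::'a::complex_inner. cinner x y)"
  by (rule bounded_linear_intro[where K="norm y"])
    (auto simp: cinner_add_left cinner_scaleR_left scaleR_conv_of_real Cauchy_Schwarz_cinner)

lemma bounded_linear_scaleC: "bounded_linear (\<lambda>x::'a::complex_inner. scaleC c x)"
  by (rule bounded_linear_intro[where K="cmod c"])
    (auto simp: scaleC_add_right scaleR_scaleC scaleC_scaleC mult.commute norm_scaleC)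

lemma cinner_ext:
  fixes u v :: "'a::complex_inner"
  assumes "\<And>x. cinner x u = cinner x v"
  shows "u = v"
proof -
  have "cinner (u - v) (u - v) = 0"
    using assms[of "u - v"] by (simp add: cinner_diff_right)
  then show ?thesis by (simp add: cinner_eq_zero_iff)
qed

lemma power2_norm_diff_le_midpoint:
  fixes a b x :: "'a::complex_inner"
  assumes "0 \<le> d" "d \<le> norm (x - scaleR (1/2) (a + b))"
  shows "(norm (a - b))^2 \<le> 2 * (norm (x - a))^2 + 2 * (norm (x - b))^2 - 4 * d^2"
proof -
  have "(x - a) + (x - b) = scaleR 2 (x - scaleR (1/2) (a + b))"
    by (simp add: algebra_simps scaleR_2)
  then have "norm ((x - a) + (x - b)) = 2 * norm (x - scaleR (1/2) (a + b))"
    by simp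
  with assms have "4 * d^2 \<le> (norm ((x - a) + (x - b)))^2"
    by (simp add: power_mult_distrib power_mono)
  moreover have "(x - b) - (x - a) = a - b" by simp
  ultimately show ?thesis
    using parallelogram_law[of "x - a" "x - b"] by (simp add: norm_minus_commute)
qed

lemma csubspace_scaleR: "csubspace S \<Longrightarrow> x \<in> S \<Longrightarrow> scaleR r x \<in> S"
  by (simp add: csubspace_def scaleR_scaleC)

text \<open>The midpoint of two members of a minimising sequence stays in \<open>M\<close>, so the
  estimate above makes the sequence Cauchy.\<close>
lemma Cauchy_minimising_sequence:
  fixes ms :: "nat \<Rightarrow> 'a::complex_inner"
  assumes M: "csubspace M" "\<And>n. ms n \<in> M"
    and d: "0 \<le> d" "\<And>v. v \<in> M \<Longrightarrow> d \<le> norm (x - v)"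
    and ms: "\<And>n. norm (x - ms n) < d + 1 / (real n + 1)"
  shows "Cauchy ms"
proof (rule metric_CauchyI)
  have ms_close: "(norm (ms a - ms b))^2 \<le> (8 * d + 4) / (real N + 1)"
    if "N \<le> a" "N \<le> b" for N a b
  proof -
    define ea eb eN where "ea = 1 / (real a + 1)" and "eb = 1 / (real b + 1)"
      and "eN = 1 / (real N + 1)"
    have ea: "0 \<le> ea" "ea \<le> eN" "ea \<le> 1" and eb: "0 \<le> eb" "eb \<le> eN" "eb \<le> 1"
      using that by (auto simp: ea_def eb_def eN_def frac_le)
    have "scaleR (1/2) (ms a + ms b) \<in> M"
      using M by (metis csubspace_def csubspace_scaleR)
    then have "(norm (ms a - ms b))^2 \<le> 2 * (norm (x - ms a))^2 + 2 * (norm (x - ms b))^2 - 4 * d^2"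
      using d by (intro power2_norm_diff_le_midpoint) auto
    also have "\<dots> \<le> 2 * (d + ea)^2 + 2 * (d + eb)^2 - 4 * d^2"
    proof -
      have "(norm (x - ms a))^2 \<le> (d + ea)^2" "(norm (x - ms b))^2 \<le> (d + eb)^2"
        using ms[of a] ms[of b] by (auto simp: ea_def eb_def intro!: power_mono)
      then show ?thesis by linarith
    qed
    also have "\<dots> = 4 * d * ea + 2 * ea * ea + 4 * d * eb + 2 * eb * eb"
      by (simp add: power2_eq_square algebra_simps)
    also have "\<dots> \<le> 4 * d * eN + 2 * eN + 4 * d * eN + 2 * eN"
      using ea eb d(1) by (intro add_mono mult_left_mono mult_mono) auto
    also have "\<dots> = (8 * d + 4) * eN" by (simp add: algebra_simps)
    also have "\<dots> = (8 * d + 4) / (real N + 1)" by (simp add: eN_def)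
    finally show ?thesis .
  qed
  fix e :: real assume e: "e > 0"
  obtain N :: nat where "(8 * d + 4) / e^2 < real N" using reals_Archimedean2 by blast
  then have "(8 * d + 4) / (real N + 1) < e^2"
    using e d(1) by (simp add: field_simps) (smt (verit) zero_less_power)
  with ms_close have "\<forall>a\<ge>N. \<forall>b\<ge>N. (norm (ms a - ms b))^2 < e^2"
    by (meson order_le_less_trans)
  then have "\<forall>a\<ge>N. \<forall>b\<ge>N. dist (ms a) (ms b) < e"
    using e by (simp add: dist_norm) (meson less_imp_le power_less_imp_less_base)
  then show "\<exists>N. \<forall>a\<ge>N. \<forall>b\<ge>N. dist (ms a) (ms b) < e" by blast
qed

lemma closed_csubspace_nearest_point:
  fixes M :: "'a::chilbert set"
  assumes "closed_csubspace M"
  shows "\<exists>m\<in>M. \<forall>v\<in>M. norm (x - m) \<le> norm (x - v)"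
proof -
  have cs: "csubspace M" and cl: "closed M" using assms by (auto simp: closed_csubspace_def)
  then have "M \<noteq> {}" by (auto simp: csubspace_def)
  define d where "d = infdist x M"
  have d0: "0 \<le> d" by (simp add: d_def infdist_nonneg)
  have d_le: "d \<le> norm (x - v)" if "v \<in> M" for v
    using infdist_le[OF that, of x] by (simp add: d_def dist_norm)
  have "\<exists>m\<in>M. norm (x - m) < d + 1 / (real n + 1)" for n
  proof -
    have "(INF v\<in>M. dist x v) < d + 1 / (real n + 1)"
      using \<open>M \<noteq> {}\<close> by (simp add: d_def infdist_notempty)
    then show ?thesis
      using \<open>M \<noteq> {}\<close> bdd_below_image_dist[of x M]
      by (subst (asm) cINF_less_iff) (auto simp: dist_norm)
  qed
  then obtain ms where ms: "\<And>n. ms n \<in> M" "\<And>n. norm (x - ms n) < d + 1 / (real n + 1)"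
    by metis
  then have "Cauchy ms" using cs d0 d_le by (intro Cauchy_minimising_sequence)
  then obtain m where m: "ms \<longlonglongrightarrow> m" using Cauchy_convergent_iff convergent_def by blast
  have "m \<in> M" using cl m ms(1) closed_sequentially by blast
  moreover have "norm (x - m) \<le> d"
  proof (rule tendsto_le[OF sequentially_bot])
    show "(\<lambda>n. d + 1 / (real n + 1)) \<longlonglongrightarrow> d"
      using tendsto_add[OF tendsto_const LIMSEQ_inverse_real_of_nat]
      by (simp add: inverse_eq_divide add.commute)
    show "(\<lambda>n. norm (x - ms n)) \<longlonglongrightarrow> norm (x - m)"
      by (intro tendsto_intros m)
    show "\<forall>\<^sub>F n in sequentially. norm (x - ms n) \<le> d + 1 / (real n + 1)"
      using ms(2) by (simp add: less_imp_le)
  qed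
  ultimately show ?thesis using d_le by force
qed

lemma cinner_eq_0_if_0_nearest:
  assumes "csubspace M" "\<And>v. v \<in> M \<Longrightarrow> norm w \<le> norm (w - v)" "m \<in> M"
  shows "cinner m w = 0"
proof -
  let ?c = "(cmod (cinner w m))^2"
  have "0 \<le> 0 - 2 * ?c * t + ?c * (norm m)^2 * t^2" for t
  proof -
    have "scaleC (of_real t * cinner w m) m \<in> M" using assms(1,3) by (simp add: csubspace_def)
    then have "(norm w)^2 \<le> (norm (w - scaleC (of_real t * cinner w m) m))^2"
      using assms(2) by (simp add: power_mono)
    then show ?thesis unfolding power2_norm_diff_scaleC_cinner by simp
  qed
  from discriminant_le_if_quadratic_nonneg[OF this] have "cinner w m = 0" by simp
  then show ?thesis by (metis cinner_commute complex_cnj_zero)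
qed

lemma ex_nonzero_orthogonal_closed_csubspace:
  fixes M :: "'a::chilbert set"
  assumes "closed_csubspace M" "M \<noteq> UNIV"
  shows "\<exists>w. w \<noteq> 0 \<and> (\<forall>m\<in>M. cinner m w = 0)"
proof -
  have cs: "csubspace M" using assms(1) by (simp add: closed_csubspace_def)
  obtain x where "x \<notin> M" using assms(2) by blast
  obtain m where m: "m \<in> M" and nearest: "\<And>v. v \<in> M \<Longrightarrow> norm (x - m) \<le> norm (x - v)"
    using closed_csubspace_nearest_point[OF assms(1)] by blast
  have "norm (x - m) \<le> norm ((x - m) - v)" if "v \<in> M" for v
    using nearest[of "m + v"] m that cs by (simp add: csubspace_def algebra_simps)
  then have "\<forall>v\<in>M. cinner v (x - m) = 0"
    using cs by (blast intro: cinner_eq_0_if_0_nearest)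
  moreover have "x - m \<noteq> 0" using \<open>x \<notin> M\<close> m by auto
  ultimately show ?thesis by blast
qed

section \<open>Bounded operators and the adjoint\<close>

lemma bounded_clinear_simps:
  assumes "bounded_clinear A"
  shows "A (x + y) = A x + A y" "A (x - y) = A x - A y" "A 0 = 0"
    "A (scaleC c x) = scaleC c (A x)" "A (scaleR r x) = scaleR r (A x)"
  using assms unfolding bounded_clinear_def
  by (auto simp: linear_simps bounded_linear.linear)

lemma bounded_clinear_imp_bounded_linear: "bounded_clinear A \<Longrightarrow> bounded_linear A"
  by (simp add: bounded_clinear_def)

lemma bounded_clinear_pos_bound: "bounded_clinear A \<Longrightarrow> \<exists>K>0. \<forall>x. norm (A x) \<le> norm x * K"
  unfolding bounded_clinear_def using bounded_linear.pos_bounded by blast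

lemma bounded_clinear_diff:
  "bounded_clinear A \<Longrightarrow> bounded_clinear B \<Longrightarrow> bounded_clinear (\<lambda>h. A h - B h)"
  unfolding bounded_clinear_def by (auto intro: bounded_linear_sub simp: scaleC_diff_right)

lemma closed_csubspace_kernel:
  assumes "bounded_clinear A"
  shows "closed_csubspace {h. A h = 0}"
  unfolding closed_csubspace_def csubspace_def
  using assms by (auto simp: bounded_clinear_simps intro!: closed_Collect_eq continuous_on_const
      linear_continuous_on bounded_clinear_imp_bounded_linear)

lemma closed_csubspace_INT:
  "(\<And>k. closed_csubspace (S k)) \<Longrightarrow> closed_csubspace (\<Inter>k. S k)"
  by (auto simp: closed_csubspace_def csubspace_def)

lemma closed_Collect_tendsto_0:
  fixes T :: "nat \<Rightarrow> 'a::real_normed_vector \<Rightarrow> 'b::real_normed_vector"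
  assumes T: "\<And>k. linear (T k)"
    and K: "0 < K" "\<And>k h. norm (T k h) \<le> K * norm h"
  shows "closed {h. (\<lambda>k. T k h) \<longlonglongrightarrow> 0}"
  unfolding closed_sequential_limits
proof (intro allI impI, elim conjE)
  fix x l assume xM: "\<forall>n. x n \<in> {h. (\<lambda>k. T k h) \<longlonglongrightarrow> 0}" and xl: "x \<longlonglongrightarrow> l"
  show "l \<in> {h. (\<lambda>k. T k h) \<longlonglongrightarrow> 0}" unfolding mem_Collect_eq LIMSEQ_iff
  proof (intro allI impI)
    fix r :: real assume r: "r > 0"
    then have "r / (2 * K) > 0" using K(1) by simp
    then obtain n0 where "\<forall>n\<ge>n0. norm (x n - l) < r / (2 * K)"
      using xl unfolding LIMSEQ_iff by blast
    then have n0: "norm (l - x n0) < r / (2 * K)" by (simp add: norm_minus_commute)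
    have "(\<lambda>k. T k (x n0)) \<longlonglongrightarrow> 0" using xM by simp
    then obtain k0 where k0: "\<forall>k\<ge>k0. norm (T k (x n0) - 0) < r / 2"
      using r unfolding LIMSEQ_iff by (meson half_gt_zero)
    have "norm (T k l - 0) < r" if "k \<ge> k0" for k
    proof -
      have "T k l = T k (x n0) + T k (l - x n0)" using linear_diff[OF T] by simp
      then have "norm (T k l) \<le> norm (T k (x n0)) + norm (T k (l - x n0))"
        by (metis norm_triangle_ineq)
      also have "\<dots> < r / 2 + K * (r / (2 * K))"
      proof (rule add_less_le_mono)
        show "norm (T k (x n0)) < r / 2" using k0 that by simp
        show "norm (T k (l - x n0)) \<le> K * (r / (2 * K))"
          using K(2)[of k "l - x n0"] n0 K(1) by (meson less_imp_le mult_left_mono order_trans)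
      qed
      also have "\<dots> = r" using K(1) by simp
      finally show ?thesis by simp
    qed
    then show "\<exists>k0. \<forall>k\<ge>k0. norm (T k l - 0) < r" by blast
  qed
qed

lemma closed_csubspace_tendsto_0:
  fixes T :: "nat \<Rightarrow> 'a::complex_inner \<Rightarrow> 'b::complex_inner"
  assumes T: "\<And>k. bounded_clinear (T k)"
    and K: "0 < K" "\<And>k h. norm (T k h) \<le> K * norm h"
  shows "closed_csubspace {h. (\<lambda>k. T k h) \<longlonglongrightarrow> 0}"
proof -
  let ?M = "{h. (\<lambda>k. T k h) \<longlonglongrightarrow> 0}"
  have "csubspace ?M"
    unfolding csubspace_def
  proof (intro conjI ballI allI)
    show "0 \<in> ?M" by (simp add: bounded_clinear_simps[OF T])
    fix x y assume x: "x \<in> ?M" and y: "y \<in> ?M"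
    show "x + y \<in> ?M"
      using tendsto_add[OF x[simplified] y[simplified]] by (simp add: bounded_clinear_simps[OF T])
  next
    fix c x assume x: "x \<in> ?M"
    show "scaleC c x \<in> ?M"
      using bounded_linear.tendsto[OF bounded_linear_scaleC x[simplified], of c]
      by (simp add: bounded_clinear_simps[OF T])
  qed
  moreover have "closed ?M"
    using T K by (intro closed_Collect_tendsto_0 bounded_linear.linear
        bounded_clinear_imp_bounded_linear)
  ultimately show ?thesis by (simp add: closed_csubspace_def)
qed

lemma riesz_representation:
  fixes f :: "'a::chilbert \<Rightarrow> complex"
  assumes bl: "bounded_linear f" and hom: "\<And>c x. f (scaleC c x) = c * f x"
  shows "\<exists>z. \<forall>x. f x = cinner x z"
proof (cases "\<forall>x. f x = 0")
  case True
  then show ?thesis by (intro exI[of _ 0]) simp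
next
  case False
  interpret bounded_linear f by (rule bl)
  have "closed_csubspace {x. f x = 0}"
    by (auto simp: closed_csubspace_def csubspace_def add hom
        intro!: closed_Collect_eq continuous_on_const continuous_on continuous_on_id)
  moreover have "{x. f x = 0} \<noteq> UNIV" using False by auto
  ultimately obtain w where w: "w \<noteq> 0" "\<And>n. f n = 0 \<Longrightarrow> cinner n w = 0"
    using ex_nonzero_orthogonal_closed_csubspace by blast
  have ww: "cinner w w \<noteq> 0" using w(1) by (simp add: cinner_eq_zero_iff)
  have fw: "f w \<noteq> 0" using w ww by blast
  show ?thesis
  proof (intro exI allI)
    fix x
    let ?s = "f x / f w"
    have "f (x - scaleC ?s w) = 0" using fw by (simp add: diff hom)
    then have "cinner (x - scaleC ?s w) w = 0" by (rule w(2))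
    then have "f x = cinner x w * f w / cinner w w"
      using fw ww by (simp add: cinner_diff_left cinner_scaleC_left field_simps)
    also have "\<dots> = cinner x (scaleC (cnj (f w / cinner w w)) w)"
      by (simp add: cinner_scaleC_right)
    finally show "f x = cinner x (scaleC (cnj (f w / cinner w w)) w)" .
  qed
qed

lemma cinner_adj_right:
  fixes A :: "'a::chilbert \<Rightarrow> 'a"
  assumes A: "bounded_clinear A"
  shows "cinner (A x) y = cinner x (adj A y)"
proof -
  have "\<exists>z. \<forall>x. cinner (A x) y = cinner x z" for y
  proof (rule riesz_representation)
    show "bounded_linear (\<lambda>x. cinner (A x) y)"
      using bounded_linear_compose[OF bounded_linear_cinner_left
          bounded_clinear_imp_bounded_linear[OF A]] .
    show "cinner (A (scaleC c x)) y = c * cinner (A x) y" for c x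
      by (simp add: bounded_clinear_simps[OF A] cinner_scaleC_left)
  qed
  then obtain B where B: "\<And>x y. cinner (A x) y = cinner x (B y)" by metis
  have "\<forall>x y. cinner (A x) y = cinner x (adj A y)"
    unfolding adj_def
  proof (rule theI[where a=B])
    show "\<forall>x y. cinner (A x) y = cinner x (B y)" using B by blast
    fix B' assume "\<forall>x y. cinner (A x) y = cinner x (B' y)"
    then show "B' = B" using B by (intro ext cinner_ext) metis
  qed
  then show ?thesis by blast
qed

lemma bounded_clinear_adj:
  fixes A :: "'a::chilbert \<Rightarrow> 'a"
  assumes A: "bounded_clinear A"
  shows "bounded_clinear (adj A)"
proof -
  obtain K where K: "K > 0" "\<And>x. norm (A x) \<le> norm x * K"
    using bounded_clinear_pos_bound[OF A] by blast
  have "bounded_linear (adj A)"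
  proof (rule bounded_linear_intro[where K=K])
    show "adj A (x + y) = adj A x + adj A y" for x y
      by (rule cinner_ext) (simp add: cinner_adj_right[OF A, symmetric] cinner_add_right)
    show "adj A (scaleR r x) = scaleR r (adj A x)" for r x
      by (rule cinner_ext) (simp add: cinner_adj_right[OF A, symmetric] cinner_scaleR_right)
    show "norm (adj A x) \<le> norm x * K" for x
    proof -
      have "(norm (adj A x))^2 = Re (cinner (A (adj A x)) x)"
        by (simp add: cinner_adj_right[OF A] power2_norm_eq_cinner)
      also have "\<dots> \<le> norm (A (adj A x)) * norm x"
        using complex_Re_le_cmod Cauchy_Schwarz_cinner order_trans by blast
      also have "\<dots> \<le> norm (adj A x) * K * norm x" by (intro mult_right_mono K) simp
      finally have "norm (adj A x) * norm (adj A x) \<le> norm (adj A x) * (norm x * K)"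
        by (simp add: power2_eq_square mult_ac)
      then show ?thesis
        using K(1) by (cases "adj A x = 0") (auto intro: mult_left_le_imp_le)
    qed
  qed
  moreover have "adj A (scaleC c y) = scaleC c (adj A y)" for c y
    by (rule cinner_ext) (simp add: cinner_adj_right[OF A, symmetric] cinner_scaleC_right)
  ultimately show ?thesis by (simp add: bounded_clinear_def)
qed

lemma invariant_subspace_if_adj_invariant:
  fixes A :: "'i \<Rightarrow> 'a::chilbert \<Rightarrow> 'a"
  assumes A: "\<forall>i\<in>I. bounded_clinear (A i)"
    and M: "closed_csubspace M" "M \<noteq> {0}" "M \<noteq> UNIV"
    and adj_inv: "\<And>i m. i \<in> I \<Longrightarrow> m \<in> M \<Longrightarrow> adj (A i) m \<in> M"
  shows "\<exists>S. closed_csubspace S \<and> S \<noteq> {0} \<and> S \<noteq> UNIV \<and> (\<forall>i\<in>I. A i ` S \<subseteq> S)"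
proof -
  define S where "S = {y. \<forall>m\<in>M. cinner y m = 0}"
  have "closed S"
  proof -
    have "S = (\<Inter>m\<in>M. {y. cinner y m = 0})" by (auto simp: S_def)
    moreover have "closed {y. cinner y m = 0}" for m
      by (intro closed_Collect_eq continuous_on_const linear_continuous_on
          bounded_linear_cinner_left)
    ultimately show ?thesis by auto
  qed
  then have "closed_csubspace S"
    by (auto simp: S_def closed_csubspace_def csubspace_def cinner_add_left cinner_scaleC_left)
  moreover have "S \<noteq> UNIV"
  proof -
    obtain m where "m \<in> M" "m \<noteq> 0"
      using M(1,2) by (auto simp: closed_csubspace_def csubspace_def)
    moreover have "cinner m m \<noteq> 0" using \<open>m \<noteq> 0\<close> by (simp add: cinner_eq_zero_iff)
    ultimately have "m \<notin> S" by (auto simp: S_def)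
    then show ?thesis by blast
  qed
  moreover have "S \<noteq> {0}"
  proof -
    obtain w where "w \<noteq> 0" "\<forall>m\<in>M. cinner m w = 0"
      using ex_nonzero_orthogonal_closed_csubspace[OF M(1,3)] by blast
    then have "w \<in> S" "w \<noteq> 0"
      by (auto simp: S_def cinner_commute[of w])
    then show ?thesis by blast
  qed
  moreover have "A i ` S \<subseteq> S" if "i \<in> I" for i
    using adj_inv[OF that] cinner_adj_right[of "A i"] A that by (auto simp: S_def)
  ultimately show ?thesis by blast
qed

section \<open>Positive operators\<close>

lemma positive_op_bounded_clinear: "positive_op X \<Longrightarrow> bounded_clinear X"
  by (simp add: positive_op_def)

lemma positive_op_form_nonneg: "positive_op X \<Longrightarrow> 0 \<le> Re (cinner (X h) h)"
  by (simp add: positive_op_def)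

lemma positive_op_hermitian:
  fixes X :: "'a::complex_inner \<Rightarrow> 'a"
  assumes "positive_op X"
  shows "cinner (X u) v = cnj (cinner (X v) u)"
proof -
  have X: "bounded_clinear X" and im: "\<And>h. Im (cinner (X h) h) = 0"
    using assms by (simp_all add: positive_op_def)
  let ?a = "cinner (X u) v" and ?b = "cinner (X v) u"
  have "cinner (X (u + v)) (u + v) = cinner (X u) u + cinner (X v) v + ?a + ?b"
    by (simp add: bounded_clinear_simps[OF X] cinner_add_left cinner_add_right)
  then have "Im ?a + Im ?b = 0" using im[of "u + v"] im[of u] im[of v] by simp
  moreover have "cinner (X (u + scaleC \<i> v)) (u + scaleC \<i> v) =
      cinner (X u) u + cinner (X v) v - \<i> * ?a + \<i> * ?b"
    by (simp add: bounded_clinear_simps[OF X] cinner_add_left cinner_add_right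
        cinner_scaleC_left cinner_scaleC_right algebra_simps)
  then have "Re ?b - Re ?a = 0" using im[of "u + scaleC \<i> v"] im[of u] im[of v] by simp
  ultimately show ?thesis by (simp add: complex_eq_iff)
qed

text \<open>The Cauchy--Schwarz inequality for the semi-inner product \<open>\<langle>X u, v\<rangle>\<close>, applied to
  \<open>u = h\<close> and \<open>v = X h\<close>.\<close>
lemma positive_op_Cauchy_Schwarz:
  fixes X :: "'a::complex_inner \<Rightarrow> 'a"
  assumes pos: "positive_op X"
  shows "((norm (X h))^2)^2 \<le> Re (cinner (X h) h) * Re (cinner (X (X h)) (X h))"
proof (rule discriminant_le_if_quadratic_nonneg)
  have X: "bounded_clinear X" using pos by (rule positive_op_bounded_clinear)
  fix t :: real
  have herm: "cinner (X (X h)) h = cnj (cinner (X h) (X h))"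
    using positive_op_hermitian[OF pos, of "X h" h] by simp
  have "cinner (X (h - scaleR t (X h))) (h - scaleR t (X h)) =
      cinner (X h) h - of_real t * cinner (X h) (X h) - of_real t * cinner (X (X h)) h
      + of_real t * of_real t * cinner (X (X h)) (X h)"
    by (simp add: bounded_clinear_simps[OF X] cinner_diff_left cinner_diff_right
        cinner_scaleR_left cinner_scaleR_right algebra_simps)
  also have "\<dots> = cinner (X h) h - of_real (2 * t * (norm (X h))^2)
      + of_real (t^2) * cinner (X (X h)) (X h)"
    unfolding herm cinner_self_eq_norm_power2 by (simp add: power2_eq_square algebra_simps)
  finally have expand: "cinner (X (h - scaleR t (X h))) (h - scaleR t (X h)) =
      cinner (X h) h - of_real (2 * t * (norm (X h))^2) + of_real (t^2) * cinner (X (X h)) (X h)" .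
  have "Re (cinner (X (h - scaleR t (X h))) (h - scaleR t (X h))) =
      Re (cinner (X h) h) - 2 * (norm (X h))^2 * t + Re (cinner (X (X h)) (X h)) * t^2"
    unfolding expand by (simp only: minus_complex.sel plus_complex.sel Re_complex_of_real Im_complex_of_real)
      (simp add: algebra_simps)
  then show "0 \<le> Re (cinner (X h) h) - 2 * (norm (X h))^2 * t + Re (cinner (X (X h)) (X h)) * t^2"
    using positive_op_form_nonneg[OF pos] by metis
qed (rule positive_op_form_nonneg[OF pos])

lemma positive_op_eq_0_if_form_eq_0:
  assumes "positive_op X" "Re (cinner (X h) h) = 0"
  shows "X h = 0"
  using positive_op_Cauchy_Schwarz[OF assms(1), of h] assms(2) by simp

lemma power2_norm_positive_op_le:
  fixes X :: "'a::complex_inner \<Rightarrow> 'a"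
  assumes pos: "positive_op X" and K: "\<And>g. Re (cinner (X g) g) \<le> K * (norm g)^2"
  shows "(norm (X h))^2 \<le> K * Re (cinner (X h) h)"
proof (cases "X h = 0")
  case True
  then show ?thesis
    using K[of h] positive_op_form_nonneg[OF pos, of h] by simp
next
  case False
  have "((norm (X h))^2)^2 \<le> Re (cinner (X h) h) * (K * (norm (X h))^2)"
    using positive_op_Cauchy_Schwarz[OF pos, of h] K[of "X h"] positive_op_form_nonneg[OF pos, of h]
    by (meson mult_left_mono order_trans)
  then have "(norm (X h))^2 * (norm (X h))^2 \<le> (norm (X h))^2 * (K * Re (cinner (X h) h))"
    by (simp add: power2_eq_square mult_ac)
  moreover have "(norm (X h))^2 > 0" using False by simp
  ultimately show ?thesis by (rule mult_left_le_imp_le)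
qed

lemma op_le_imp_form_le: "op_le Y Z \<Longrightarrow> Re (cinner (Y h) h) \<le> Re (cinner (Z h) h)"
  by (simp add: op_le_def positive_op_def cinner_diff_left)

lemma op_le_if_form_le:
  assumes "positive_op Y" "positive_op Z" "\<And>h. Re (cinner (Y h) h) \<le> Re (cinner (Z h) h)"
  shows "op_le Y Z"
  using assms by (simp add: op_le_def positive_op_def cinner_diff_left bounded_clinear_diff)

section \<open>Unconditional sums and a uniform boundedness principle\<close>

lemma has_sum_nonneg_tail_less:
  fixes f :: "'i \<Rightarrow> real"
  assumes sum: "(f has_sum s) I" and nonneg: "\<And>i. i \<in> I \<Longrightarrow> 0 \<le> f i" and "e > 0"
  shows "\<exists>F0. finite F0 \<and> F0 \<subseteq> I \<and> (\<forall>F. finite F \<and> F \<subseteq> I - F0 \<longrightarrow> sum f F < e)"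
proof -
  obtain F0 where F0: "finite F0" "F0 \<subseteq> I" "dist (sum f F0) s \<le> e / 2"
    using has_sum_finite_approximation[OF sum, of "e / 2"] \<open>e > 0\<close> by auto
  have "sum f F < e" if F: "finite F" "F \<subseteq> I - F0" for F
  proof -
    have "sum f F + sum f F0 = sum f (F \<union> F0)"
      using F F0(1) by (intro sum.union_disjoint[symmetric]) auto
    also have "\<dots> \<le> s"
      using F F0 nonneg by (intro finite_sum_le_has_sum[OF sum]) auto
    finally have "sum f F \<le> s - sum f F0" by simp
    moreover have "s - sum f F0 \<le> e / 2"
      using F0(3) abs_ge_self[of "s - sum f F0"] by (simp add: dist_real_def abs_minus_commute)
    ultimately show ?thesis using \<open>e > 0\<close> by linarith
  qed
  with F0 show ?thesis by blast
qed

lemma summable_on_if_Cauchy: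
  fixes f :: "'i \<Rightarrow> 'b::{real_normed_vector, complete_space}"
  assumes Cauchy: "\<And>e. e > 0 \<Longrightarrow>
    \<exists>F0. finite F0 \<and> F0 \<subseteq> I \<and> (\<forall>F. finite F \<and> F \<subseteq> I - F0 \<longrightarrow> norm (sum f F) < e)"
  shows "f summable_on I"
proof -
  let ?S = "filtermap (sum f) (finite_subsets_at_top I)"
  have "cauchy_filter ?S"
    unfolding cauchy_filter_iff
  proof (intro allI impI)
    fix P :: "'b \<times> 'b \<Rightarrow> bool"
    assume "eventually P uniformity"
    then obtain e where e: "e > 0" "\<And>x y. dist x y < e \<Longrightarrow> P (x, y)"
      unfolding eventually_uniformity_metric by blast
    obtain F0 where F0: "finite F0" "F0 \<subseteq> I"
      "\<And>F. finite F \<Longrightarrow> F \<subseteq> I - F0 \<Longrightarrow> norm (sum f F) < e / 2"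
      using Cauchy[of "e / 2"] e(1) by auto
    let ?X = "sum f ` {G. finite G \<and> F0 \<subseteq> G \<and> G \<subseteq> I}"
    have "eventually (\<lambda>x. x \<in> ?X) ?S"
      unfolding eventually_filtermap eventually_finite_subsets_at_top using F0 by blast
    moreover have "P z" if z: "z \<in> ?X \<times> ?X" for z
    proof -
      obtain G1 G2 where G: "z = (sum f G1, sum f G2)" "finite G1" "F0 \<subseteq> G1" "G1 \<subseteq> I"
        "finite G2" "F0 \<subseteq> G2" "G2 \<subseteq> I"
        using z by auto
      have "dist (sum f G1) (sum f G2) = norm (sum f (G1 - F0) - sum f (G2 - F0))"
        using G F0(1) by (simp add: dist_norm sum.subset_diff[of F0 G1] sum.subset_diff[of F0 G2])
      also have "\<dots> \<le> norm (sum f (G1 - F0)) + norm (sum f (G2 - F0))"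
        by (rule norm_triangle_ineq4)
      also have "\<dots> < e / 2 + e / 2" using G by (intro add_strict_mono F0(3)) auto
      finally show "P z" using e(2) G(1) by simp
    qed
    ultimately show "\<exists>X. eventually (\<lambda>x. x \<in> X) ?S \<and> (\<forall>z\<in>X \<times> X. P z)" by blast
  qed
  then obtain s where "?S \<le> nhds s"
    using cauchy_filter_convergent by (auto simp: convergent_filter_iff)
  then have "(f has_sum s) I" by (simp add: has_sum_def filterlim_def)
  then show ?thesis unfolding summable_on_def by blast
qed

lemma norm_has_sum_le_if_partial_sums_le:
  fixes f :: "'i \<Rightarrow> 'b::real_normed_vector"
  assumes "(f has_sum s) I" "\<And>F. finite F \<Longrightarrow> F \<subseteq> I \<Longrightarrow> norm (sum f F) \<le> B"
  shows "norm s \<le> B"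
proof (rule tendsto_upperbound)
  show "((\<lambda>F. norm (sum f F)) \<longlongrightarrow> norm s) (finite_subsets_at_top I)"
    using assms(1) by (intro tendsto_norm) (simp add: has_sum_def)
  show "eventually (\<lambda>F. norm (sum f F) \<le> B) (finite_subsets_at_top I)"
    using assms(2) by (intro eventually_finite_subsets_at_top_weakI)
qed (simp add: finite_subsets_at_top_neq_bot)

lemma pointwise_bounded_imp_bounded_on_ball:
  fixes q :: "'i \<Rightarrow> 'a::complete_space \<Rightarrow> real"
  assumes cont: "\<And>j. j \<in> J \<Longrightarrow> continuous_on UNIV (q j)"
    and bdd: "\<And>x. \<exists>B. \<forall>j\<in>J. q j x \<le> B"
  shows "\<exists>x0 r B. 0 < r \<and> (\<forall>j\<in>J. \<forall>x\<in>ball x0 r. q j x \<le> B)"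
proof -
  define E where "E n = {x. \<forall>j\<in>J. q j x \<le> real n}" for n :: nat
  have closed_E: "closed (E n)" for n
  proof -
    have "E n = (\<Inter>j\<in>J. {x. q j x \<le> real n})" by (auto simp: E_def)
    then show ?thesis
      using cont by (simp add: closed_INT closed_Collect_le continuous_on_const)
  qed
  have cover: "(\<Union>n. E n) = UNIV"
  proof -
    have "x \<in> (\<Union>n. E n)" for x
    proof -
      obtain B where B: "\<forall>j\<in>J. q j x \<le> B" using bdd by blast
      have "B \<le> real (nat \<lceil>B\<rceil>)" by (rule real_nat_ceiling_ge)
      with B have "x \<in> E (nat \<lceil>B\<rceil>)" unfolding E_def by (blast intro: order_trans)
      then show ?thesis by blast
    qed
    then show ?thesis by blast
  qed
  have "\<exists>n. interior (E n) \<noteq> {}"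
  proof (rule ccontr)
    assume "\<not> ?thesis"
    then have "\<And>T. T \<in> range E \<Longrightarrow> closedin euclidean T \<and> euclidean interior_of T = {}"
      using closed_E closed_closedin by auto
    then have "euclidean interior_of \<Union>(range E) = {}"
      by (intro Baire_category_alt) (auto simp: completely_metrizable_space_euclidean)
    then show False using cover by simp
  qed
  then obtain n x0 where "x0 \<in> interior (E n)" by blast
  then obtain r where "r > 0" "ball x0 r \<subseteq> E n"
    by (meson interior_subset open_contains_ball open_interior subset_trans)
  then show ?thesis
    by (intro exI[of _ x0] exI[of _ r] exI[of _ "real n"]) (auto simp: E_def)
qed

section \<open>The map \<open>\<phi>\<^sub>A\<close>\<close>

locale kraus_family =
  fixes A :: "nat \<Rightarrow> 'a::chilbert \<Rightarrow> 'a" and I :: "nat set"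
  assumes bounded: "\<forall>i\<in>I. bounded_clinear (A i)"
    and normal: "\<forall>h. (\<lambda>i. A i (adj (A i) h)) summable_on I"
begin

lemma cinner_A_adj: "i \<in> I \<Longrightarrow> cinner (A i x) y = cinner x (adj (A i) y)"
  using bounded cinner_adj_right by blast

lemma bounded_clinear_adj_A: "i \<in> I \<Longrightarrow> bounded_clinear (adj (A i))"
  using bounded bounded_clinear_adj by blast

definition adj_sq_sum :: "nat set \<Rightarrow> 'a \<Rightarrow> real" where
  "adj_sq_sum F g = (\<Sum>i\<in>F. (norm (adj (A i) g))^2)"

lemma adj_sq_sum_nonneg: "0 \<le> adj_sq_sum F g"
  by (simp add: adj_sq_sum_def sum_nonneg)

lemma adj_sq_sum_scaleR: "F \<subseteq> I \<Longrightarrow> adj_sq_sum F (scaleR c g) = c^2 * adj_sq_sum F g"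
  unfolding adj_sq_sum_def sum_distrib_left
  by (intro sum.cong refl)
    (auto simp: bounded_clinear_simps[OF bounded_clinear_adj_A] power_mult_distrib)

lemma adj_sq_sum_diff_le:
  "F \<subseteq> I \<Longrightarrow> adj_sq_sum F (a - b) \<le> 2 * adj_sq_sum F a + 2 * adj_sq_sum F b"
  unfolding adj_sq_sum_def sum_distrib_left sum.distrib[symmetric]
  by (intro sum_mono) (auto simp: bounded_clinear_simps[OF bounded_clinear_adj_A] power2_norm_diff_le)

lemma continuous_on_adj_sq_sum: "F \<subseteq> I \<Longrightarrow> continuous_on UNIV (adj_sq_sum F)"
  unfolding adj_sq_sum_def
  by (intro continuous_on_sum continuous_on_power continuous_on_norm linear_continuous_on
      bounded_clinear_imp_bounded_linear bounded_clinear_adj_A) auto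

lemma has_sum_adj_sq:
  "((\<lambda>i. (norm (adj (A i) g))^2) has_sum Re (cinner (phiA A I (\<lambda>x. x) g) g)) I"
proof -
  have "((\<lambda>i. A i (adj (A i) g)) has_sum phiA A I (\<lambda>x. x) g) I"
    unfolding phiA_def using normal by simp
  from has_sum_Re[OF has_sum_bounded_linear[OF bounded_linear_cinner_left this]]
  show ?thesis
    by (rule has_sum_cong[THEN iffD1, rotated]) (simp add: cinner_A_adj power2_norm_eq_cinner)
qed

text \<open>The partial sums are pointwise bounded by \<open>has_sum_adj_sq\<close>; Baire's theorem makes them
  uniformly bounded on a ball, and \<open>adj_sq_sum_diff_le\<close> moves that ball to the origin.\<close>
lemma adj_sq_sum_bounded_near_0:
  "\<exists>r B. 0 < r \<and> 0 \<le> B \<and>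
    (\<forall>F u. finite F \<longrightarrow> F \<subseteq> I \<longrightarrow> norm u < r \<longrightarrow> adj_sq_sum F u \<le> B)"
proof -
  let ?J = "{F. finite F \<and> F \<subseteq> I}"
  have cont: "continuous_on UNIV (adj_sq_sum F)" if "F \<in> ?J" for F
    using that continuous_on_adj_sq_sum by blast
  have bdd: "\<exists>B. \<forall>F\<in>?J. adj_sq_sum F g \<le> B" for g
  proof (intro exI ballI)
    fix F assume "F \<in> ?J"
    then show "adj_sq_sum F g \<le> Re (cinner (phiA A I (\<lambda>x. x) g) g)"
      unfolding adj_sq_sum_def by (intro finite_sum_le_has_sum[OF has_sum_adj_sq]) auto
  qed
  obtain g0 r B where r: "0 < r" and ball: "\<forall>F\<in>?J. \<forall>g\<in>ball g0 r. adj_sq_sum F g \<le> B"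
    using pointwise_bounded_imp_bounded_on_ball[OF cont bdd] by blast
  have "{} \<in> ?J" "g0 \<in> ball g0 r" using r by auto
  with ball have "adj_sq_sum {} g0 \<le> B" by blast
  then have B: "0 \<le> 4 * B" by (simp add: adj_sq_sum_def)
  have "adj_sq_sum F u \<le> 4 * B" if "finite F" "F \<subseteq> I" "norm u < r" for F u
  proof -
    have "g0 + u \<in> ball g0 r" "g0 \<in> ball g0 r" using that r by (auto simp: dist_norm)
    then have "adj_sq_sum F (g0 + u) \<le> B" "adj_sq_sum F g0 \<le> B"
      using ball that by blast+
    with adj_sq_sum_diff_le[OF \<open>F \<subseteq> I\<close>, of "g0 + u" g0] show ?thesis by simp
  qed
  with r B show ?thesis by blast
qed

lemma adj_sq_sum_le_quadratic:
  "\<exists>C>0. \<forall>F g. finite F \<longrightarrow> F \<subseteq> I \<longrightarrow> adj_sq_sum F g \<le> C * (norm g)^2"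
proof -
  obtain r B where r: "0 < r" and B: "0 \<le> B"
    and small: "\<And>F u. finite F \<Longrightarrow> F \<subseteq> I \<Longrightarrow> norm u < r \<Longrightarrow> adj_sq_sum F u \<le> B"
    using adj_sq_sum_bounded_near_0 by blast
  define C where "C = 4 * (B + 1) / r^2"
  have "adj_sq_sum F g \<le> C * (norm g)^2" if F: "finite F" "F \<subseteq> I" for F g
  proof (cases "g = 0")
    case True
    then show ?thesis using adj_sq_sum_scaleR[OF F(2), of 0 0] by simp
  next
    case False
    define c where "c = r / (2 * norm g)"
    have c: "c > 0" "norm (scaleR c g) = r / 2" using False r by (auto simp: c_def)
    then have "c^2 * adj_sq_sum F g \<le> B"
      using small[OF F, of "scaleR c g"] r by (simp add: adj_sq_sum_scaleR[OF F(2)])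
    then have "adj_sq_sum F g \<le> B / c^2" using c by (simp add: field_simps)
    also have "\<dots> = 4 * B / r^2 * (norm g)^2"
      using False r by (simp add: c_def field_simps power2_eq_square)
    also have "\<dots> \<le> C * (norm g)^2"
      unfolding C_def using r by (intro mult_right_mono divide_right_mono) auto
    finally show ?thesis .
  qed
  moreover have "C > 0" using r B by (simp add: C_def)
  ultimately show ?thesis by blast
qed

lemma norm_sum_A_adj_le:
  assumes C: "\<And>F g. finite F \<Longrightarrow> F \<subseteq> I \<Longrightarrow> adj_sq_sum F g \<le> C * (norm g)^2" "0 \<le> C"
    and Y: "\<And>v. norm (Y v) \<le> norm v * K" "0 \<le> K"
    and F: "finite F" "F \<subseteq> I"
  shows "norm (\<Sum>i\<in>F. A i (Y (adj (A i) h))) \<le> K * sqrt C * sqrt (adj_sq_sum F h)"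
proof -
  define v where "v = (\<Sum>i\<in>F. A i (Y (adj (A i) h)))"
  have L2: "L2_set (\<lambda>i. norm (adj (A i) g)) F = sqrt (adj_sq_sum F g)" for g
    by (simp add: L2_set_def adj_sq_sum_def)
  have "(norm v)^2 = (\<Sum>i\<in>F. Re (cinner (Y (adj (A i) h)) (adj (A i) v)))"
    using F(2) by (simp add: power2_norm_eq_cinner v_def cinner_sum_left cinner_A_adj subset_iff
        flip: Re_sum)
  also have "\<dots> \<le> (\<Sum>i\<in>F. K * (\<bar>norm (adj (A i) h)\<bar> * \<bar>norm (adj (A i) v)\<bar>))"
  proof (rule sum_mono)
    fix i
    have "Re (cinner (Y (adj (A i) h)) (adj (A i) v)) \<le> norm (Y (adj (A i) h)) * norm (adj (A i) v)"
      using complex_Re_le_cmod Cauchy_Schwarz_cinner order_trans by blast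
    also have "\<dots> \<le> norm (adj (A i) h) * K * norm (adj (A i) v)"
      by (rule mult_right_mono[OF Y(1)]) simp
    finally show "Re (cinner (Y (adj (A i) h)) (adj (A i) v))
        \<le> K * (\<bar>norm (adj (A i) h)\<bar> * \<bar>norm (adj (A i) v)\<bar>)"
      by (simp add: mult_ac)
  qed
  also have "\<dots> \<le> K * (sqrt (adj_sq_sum F h) * sqrt (adj_sq_sum F v))"
    unfolding sum_distrib_left[symmetric] L2[symmetric]
    by (intro mult_left_mono L2_set_mult_ineq Y(2))
  also have "\<dots> \<le> K * (sqrt (adj_sq_sum F h) * (sqrt C * norm v))"
  proof -
    have "sqrt (adj_sq_sum F v) \<le> sqrt (C * (norm v)^2)" using C(1)[OF F] by simp
    also have "\<dots> = sqrt C * norm v" by (simp add: real_sqrt_mult)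
    finally show ?thesis using Y(2) adj_sq_sum_nonneg[of F h] by (intro mult_left_mono) auto
  qed
  finally have "norm v * norm v \<le> norm v * (K * sqrt C * sqrt (adj_sq_sum F h))"
    by (simp add: power2_eq_square mult_ac)
  then have "norm v \<le> K * sqrt C * sqrt (adj_sq_sum F h)"
    using Y(2) C(2) adj_sq_sum_nonneg[of F h]
    by (cases "norm v = 0") (auto intro: mult_left_le_imp_le)
  then show ?thesis by (simp add: v_def)
qed

lemma summable_on_A_adj:
  assumes Y: "bounded_clinear Y"
  shows "(\<lambda>i. A i (Y (adj (A i) h))) summable_on I"
proof (rule summable_on_if_Cauchy)
  fix e :: real assume e: "e > 0"
  obtain C where C: "C > 0" "\<And>F g. finite F \<Longrightarrow> F \<subseteq> I \<Longrightarrow> adj_sq_sum F g \<le> C * (norm g)^2"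
    using adj_sq_sum_le_quadratic by blast
  obtain K where K: "K > 0" "\<And>x. norm (Y x) \<le> norm x * K"
    using bounded_clinear_pos_bound[OF Y] by blast
  define M where "M = K * sqrt C + 1"
  have "0 \<le> K * sqrt C" using K C by simp
  then have M: "M > 0" "K * sqrt C < M" by (auto simp: M_def)
  obtain F0 where F0: "finite F0" "F0 \<subseteq> I"
    "\<And>F. finite F \<Longrightarrow> F \<subseteq> I - F0 \<Longrightarrow> adj_sq_sum F h < (e / M)^2"
    using has_sum_nonneg_tail_less[OF has_sum_adj_sq[of h], of "(e / M)^2"] e M
    unfolding adj_sq_sum_def by auto
  have "norm (\<Sum>i\<in>F. A i (Y (adj (A i) h))) < e" if F: "finite F" "F \<subseteq> I - F0" for F
  proof -
    have "sqrt (adj_sq_sum F h) < e / M"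
      using F0(3)[OF F] e M real_sqrt_less_mono[of "adj_sq_sum F h" "(e / M)^2"] by simp
    have "norm (\<Sum>i\<in>F. A i (Y (adj (A i) h))) \<le> K * sqrt C * sqrt (adj_sq_sum F h)"
      using F K C by (intro norm_sum_A_adj_le) auto
    also have "\<dots> \<le> K * sqrt C * (e / M)"
      using \<open>sqrt (adj_sq_sum F h) < e / M\<close> K C by (intro mult_left_mono) auto
    also have "\<dots> < e"
      using M e by (simp add: divide_less_eq mult.commute)
    finally show ?thesis .
  qed
  with F0(1,2) show "\<exists>F0. finite F0 \<and> F0 \<subseteq> I \<and>
      (\<forall>F. finite F \<and> F \<subseteq> I - F0 \<longrightarrow> norm (\<Sum>i\<in>F. A i (Y (adj (A i) h))) < e)"
    by blast
qed

lemma has_sum_phiA: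
  "bounded_clinear Y \<Longrightarrow> ((\<lambda>i. A i (Y (adj (A i) h))) has_sum phiA A I Y h) I"
  unfolding phiA_def using summable_on_A_adj by simp

lemma phiA_add:
  assumes Y: "bounded_clinear Y"
  shows "phiA A I Y (x + y) = phiA A I Y x + phiA A I Y y"
proof (rule has_sum_unique)
  show "((\<lambda>i. A i (Y (adj (A i) (x + y)))) has_sum phiA A I Y (x + y)) I"
    by (rule has_sum_phiA[OF Y])
  show "((\<lambda>i. A i (Y (adj (A i) (x + y)))) has_sum phiA A I Y x + phiA A I Y y) I"
    using has_sum_add[OF has_sum_phiA[OF Y, of x] has_sum_phiA[OF Y, of y]]
    by (rule has_sum_cong[THEN iffD1, rotated])
      (use bounded in \<open>simp add: bounded_clinear_simps[OF Y] bounded_clinear_simps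
        bounded_clinear_simps[OF bounded_clinear_adj_A]\<close>)
qed

lemma phiA_scaleC:
  assumes Y: "bounded_clinear Y"
  shows "phiA A I Y (scaleC c x) = scaleC c (phiA A I Y x)"
proof (rule has_sum_unique)
  show "((\<lambda>i. A i (Y (adj (A i) (scaleC c x)))) has_sum phiA A I Y (scaleC c x)) I"
    by (rule has_sum_phiA[OF Y])
  show "((\<lambda>i. A i (Y (adj (A i) (scaleC c x)))) has_sum scaleC c (phiA A I Y x)) I"
    using has_sum_bounded_linear[OF bounded_linear_scaleC has_sum_phiA[OF Y, of x]]
    by (rule has_sum_cong[THEN iffD1, rotated])
      (use bounded in \<open>simp add: bounded_clinear_simps[OF Y] bounded_clinear_simps
        bounded_clinear_simps[OF bounded_clinear_adj_A]\<close>)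
qed

lemma bounded_clinear_phiA:
  assumes Y: "bounded_clinear Y"
  shows "bounded_clinear (phiA A I Y)"
proof -
  obtain C where C: "C > 0" "\<And>F g. finite F \<Longrightarrow> F \<subseteq> I \<Longrightarrow> adj_sq_sum F g \<le> C * (norm g)^2"
    using adj_sq_sum_le_quadratic by blast
  obtain K where K: "K > 0" "\<And>x. norm (Y x) \<le> norm x * K"
    using bounded_clinear_pos_bound[OF Y] by blast
  have "norm (phiA A I Y h) \<le> norm h * (K * C)" for h
  proof (rule norm_has_sum_le_if_partial_sums_le[OF has_sum_phiA[OF Y]])
    fix F assume F: "finite F" "F \<subseteq> I"
    have "norm (\<Sum>i\<in>F. A i (Y (adj (A i) h))) \<le> K * sqrt C * sqrt (adj_sq_sum F h)"
      using F K C by (intro norm_sum_A_adj_le) auto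
    also have "\<dots> \<le> K * sqrt C * sqrt (C * (norm h)^2)"
      using C(2)[OF F, of h] K C(1) by (intro mult_left_mono) auto
    also have "\<dots> = norm h * (K * C)"
      using C(1) by (simp add: real_sqrt_mult mult_ac)
    finally show "norm (\<Sum>i\<in>F. A i (Y (adj (A i) h))) \<le> norm h * (K * C)" .
  qed
  then have "bounded_linear (phiA A I Y)"
    using phiA_add[OF Y] phiA_scaleC[OF Y, of "complex_of_real r" for r]
    by (intro bounded_linear_intro[where K="K * C"]) (auto simp: scaleR_scaleC)
  with phiA_scaleC[OF Y] show ?thesis by (simp add: bounded_clinear_def)
qed

lemma has_sum_cinner_phiA:
  assumes "bounded_clinear Y"
  shows "((\<lambda>i. cinner (Y (adj (A i) h)) (adj (A i) h)) has_sum cinner (phiA A I Y h) h) I"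
  using has_sum_bounded_linear[OF bounded_linear_cinner_left has_sum_phiA[OF assms]]
  by (rule has_sum_cong[THEN iffD1, rotated]) (simp add: cinner_A_adj)

lemma positive_op_phiA:
  assumes Y: "positive_op Y"
  shows "positive_op (phiA A I Y)"
proof -
  note sum = has_sum_cinner_phiA[OF positive_op_bounded_clinear[OF Y]]
  have "Im (cinner (phiA A I Y h) h) = 0" for h
    using has_sum_unique[OF has_sum_Im[OF sum] has_sum_0] Y by (simp add: positive_op_def)
  moreover have "0 \<le> Re (cinner (phiA A I Y h) h)" for h
    using has_sum_Re[OF sum] by (rule has_sum_nonneg) (rule positive_op_form_nonneg[OF Y])
  ultimately show ?thesis
    using bounded_clinear_phiA[OF positive_op_bounded_clinear[OF Y]]
    by (simp add: positive_op_def)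
qed

lemma phiA_mono:
  assumes Y: "positive_op Y" and Z: "positive_op Z" and "op_le Y Z"
  shows "op_le (phiA A I Y) (phiA A I Z)"
proof (rule op_le_if_form_le[OF positive_op_phiA[OF Y] positive_op_phiA[OF Z]])
  fix h
  show "Re (cinner (phiA A I Y h) h) \<le> Re (cinner (phiA A I Z h) h)"
    using has_sum_Re[OF has_sum_cinner_phiA[OF positive_op_bounded_clinear[OF Y]]]
      has_sum_Re[OF has_sum_cinner_phiA[OF positive_op_bounded_clinear[OF Z]]]
    by (rule has_sum_mono) (rule op_le_imp_form_le[OF \<open>op_le Y Z\<close>])
qed

end


locale superharmonic = kraus_family +
  fixes X :: "'a \<Rightarrow> 'a"
  assumes positive: "positive_op X" and super: "op_le (phiA A I X) X"
begin

abbreviation Xk :: "nat \<Rightarrow> 'a \<Rightarrow> 'a" where "Xk k \<equiv> (phiA A I ^^ k) X"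

abbreviation Qk :: "nat \<Rightarrow> 'a \<Rightarrow> real" where "Qk k h \<equiv> Re (cinner (Xk k h) h)"

lemma positive_op_Xk: "positive_op (Xk k)"
  by (induction k) (simp_all add: positive positive_op_phiA)

lemma bounded_clinear_Xk: "bounded_clinear (Xk k)"
  using positive_op_Xk by (rule positive_op_bounded_clinear)

lemma op_le_Xk_Suc: "op_le (Xk (Suc k)) (Xk k)"
proof (induction k)
  case 0
  then show ?case using super by simp
next
  case (Suc k)
  then show ?case
    using phiA_mono[OF positive_op_Xk positive_op_Xk, of "Suc k" k] by simp
qed

lemma Qk_antimono: "j \<le> k \<Longrightarrow> Qk k h \<le> Qk j h"
  using lift_Suc_antimono_le[of "\<lambda>k. Qk k h"] op_le_imp_form_le[OF op_le_Xk_Suc] by blast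

lemma Qk_nonneg: "0 \<le> Qk k h"
  using positive_op_Xk by (rule positive_op_form_nonneg)

lemma has_sum_Qk_adj: "((\<lambda>i. Qk k (adj (A i) h)) has_sum Qk (Suc k) h) I"
  using has_sum_Re[OF has_sum_cinner_phiA[OF bounded_clinear_Xk[of k]]] by simp

lemma Qk_adj_le: "i \<in> I \<Longrightarrow> Qk k (adj (A i) h) \<le> Qk (Suc k) h"
  using finite_sum_le_has_sum[OF has_sum_Qk_adj, of "{i}"] Qk_nonneg by simp

lemma Xk_bounds: "\<exists>K>0. \<forall>k h. (norm (Xk k h))^2 \<le> K * Qk k h \<and> norm (Xk k h) \<le> K * norm h"
proof -
  obtain K where K: "K > 0" "\<And>x. norm (X x) \<le> norm x * K"
    using bounded_clinear_pos_bound[OF positive_op_bounded_clinear[OF positive]] by blast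
  have Q: "Qk k g \<le> K * (norm g)^2" for k g
  proof -
    have "Qk k g \<le> Qk 0 g" by (rule Qk_antimono) simp
    also have "\<dots> \<le> norm (X g) * norm g"
      using complex_Re_le_cmod Cauchy_Schwarz_cinner order_trans by fastforce
    also have "\<dots> \<le> K * (norm g)^2"
      using mult_right_mono[OF K(2)[of g] norm_ge_zero[of g]] by (simp add: power2_eq_square mult_ac)
    finally show ?thesis .
  qed
  have sq: "(norm (Xk k h))^2 \<le> K * Qk k h" for k h
    using power2_norm_positive_op_le[OF positive_op_Xk Q] .
  have "norm (Xk k h) \<le> K * norm h" for k h
  proof (rule power2_le_imp_le)
    have "(norm (Xk k h))^2 \<le> K * (K * (norm h)^2)"
      using sq Q K(1) by (meson mult_left_mono order_trans less_imp_le)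
    then show "(norm (Xk k h))^2 \<le> (K * norm h)^2" by (simp add: power2_eq_square mult_ac)
  qed (use K in simp)
  with sq K(1) show ?thesis by blast
qed

lemma Xk_tendsto_0_iff: "(\<lambda>k. Xk k h) \<longlonglongrightarrow> 0 \<longleftrightarrow> (\<lambda>k. Qk k h) \<longlonglongrightarrow> 0"
proof
  assume "(\<lambda>k. Xk k h) \<longlonglongrightarrow> 0"
  then have lim: "(\<lambda>k. norm (Xk k h) * norm h) \<longlonglongrightarrow> 0"
    by (simp add: tendsto_mult_left_zero tendsto_norm_zero)
  have "\<forall>k. norm (Qk k h) \<le> norm (Xk k h) * norm h"
    using Qk_nonneg complex_Re_le_cmod Cauchy_Schwarz_cinner order_trans
    by (metis real_norm_def abs_of_nonneg)
  then show "(\<lambda>k. Qk k h) \<longlonglongrightarrow> 0"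
    using lim by (rule Lim_null_comparison[OF always_eventually])
next
  assume Q: "(\<lambda>k. Qk k h) \<longlonglongrightarrow> 0"
  obtain K where K: "\<And>k. (norm (Xk k h))^2 \<le> K * Qk k h" using Xk_bounds by blast
  have "\<forall>k. norm ((norm (Xk k h))^2) \<le> K * Qk k h" using K by simp
  then have "(\<lambda>k. (norm (Xk k h))^2) \<longlonglongrightarrow> 0"
    using tendsto_mult_right_zero[OF Q] by (rule Lim_null_comparison[OF always_eventually])
  then have "(\<lambda>k. sqrt ((norm (Xk k h))^2)) \<longlonglongrightarrow> sqrt 0" by (rule tendsto_real_sqrt)
  then show "(\<lambda>k. Xk k h) \<longlonglongrightarrow> 0" by (simp add: tendsto_norm_zero_iff)
qed

lemma kernel_adj_invariant:
  assumes "i \<in> I" "X m = 0"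
  shows "X (adj (A i) m) = 0"
proof (rule positive_op_eq_0_if_form_eq_0[OF positive])
  have "Qk 0 (adj (A i) m) \<le> Qk 1 m" using Qk_adj_le[OF \<open>i \<in> I\<close>, of 0 m] by simp
  also have "\<dots> \<le> Qk 0 m" by (rule Qk_antimono) simp
  also have "\<dots> = 0" using assms(2) by simp
  finally show "Re (cinner (X (adj (A i) m)) (adj (A i) m)) = 0"
    using Qk_nonneg[of 0 "adj (A i) m"] by simp
qed

lemma pure_adj_invariant:
  assumes "i \<in> I" "(\<lambda>k. Xk k m) \<longlonglongrightarrow> 0"
  shows "(\<lambda>k. Xk k (adj (A i) m)) \<longlonglongrightarrow> 0"
proof -
  have "\<forall>k. norm (Qk k (adj (A i) m)) \<le> Qk (Suc k) m"
    using Qk_adj_le[OF assms(1)] Qk_nonneg by (simp del: funpow.simps)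
  moreover have "(\<lambda>k. Qk (Suc k) m) \<longlonglongrightarrow> 0"
    using assms(2) Xk_tendsto_0_iff LIMSEQ_Suc by blast
  ultimately have "(\<lambda>k. Qk k (adj (A i) m)) \<longlonglongrightarrow> 0"
    by (rule Lim_null_comparison[OF always_eventually])
  then show ?thesis using Xk_tendsto_0_iff by blast
qed

lemma fixed_adj_invariant:
  assumes "i \<in> I" "\<And>k. Xk k m = X m"
  shows "Xk k (adj (A i) m) = X (adj (A i) m)"
proof -
  let ?d = "\<lambda>j. Qk 0 (adj (A j) m) - Qk k (adj (A j) m)"
  have d_nonneg: "0 \<le> ?d j" for j using Qk_antimono[of 0 k] by simp
  have "(?d has_sum (Qk 1 m - Qk (Suc k) m)) I"
    using has_sum_add[OF has_sum_Qk_adj[of 0 m] has_sum_cmult_right[OF has_sum_Qk_adj[of k m], of "-1"]]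
    by simp
  then have d_sum: "(?d has_sum 0) I" using assms(2)[of 1] assms(2)[of "Suc k"] by simp
  have "?d i \<le> 0"
    using finite_sum_le_has_sum[OF d_sum, of "{i}"] d_nonneg assms(1) by simp
  then have "Re (cinner (X (adj (A i) m) - Xk k (adj (A i) m)) (adj (A i) m)) = 0"
    using d_nonneg[of i] by (simp add: cinner_diff_left)
  moreover have "positive_op (\<lambda>g. X g - Xk k g)"
    using op_le_if_form_le[OF positive_op_Xk positive, of k] Qk_antimono[of 0 k]
    by (simp add: op_le_def)
  ultimately show ?thesis using positive_op_eq_0_if_form_eq_0 by fastforce
qed

lemma invariant_subspace_if_not_inj:
  assumes "X \<noteq> (\<lambda>h. 0)" "\<not> inj X"
  shows "\<exists>S. closed_csubspace S \<and> S \<noteq> {0} \<and> S \<noteq> UNIV \<and> (\<forall>i\<in>I. A i ` S \<subseteq> S)"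
proof (rule invariant_subspace_if_adj_invariant[OF bounded closed_csubspace_kernel])
  have X: "bounded_clinear X" using positive by (rule positive_op_bounded_clinear)
  then show "bounded_clinear X" .
  obtain x y where "x \<noteq> y" "X x = X y" using assms(2) by (auto simp: inj_def)
  then have "x - y \<in> {h. X h = 0}" "x - y \<noteq> 0" by (auto simp: bounded_clinear_simps[OF X])
  then show "{h. X h = 0} \<noteq> {0}" by blast
  show "{h. X h = 0} \<noteq> UNIV" using assms(1) by auto
  show "adj (A i) m \<in> {h. X h = 0}" if "i \<in> I" "m \<in> {h. X h = 0}" for i m
    using that kernel_adj_invariant by simp
qed

lemma invariant_subspace_if_not_pure:
  assumes "\<not> (\<forall>h. (\<lambda>k. Xk k h) \<longlonglongrightarrow> 0)" "\<exists>h. h \<noteq> 0 \<and> (\<lambda>k. Xk k h) \<longlonglongrightarrow> 0"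
  shows "\<exists>S. closed_csubspace S \<and> S \<noteq> {0} \<and> S \<noteq> UNIV \<and> (\<forall>i\<in>I. A i ` S \<subseteq> S)"
proof (rule invariant_subspace_if_adj_invariant[OF bounded])
  obtain K where "0 < K" "\<And>k h. norm (Xk k h) \<le> K * norm h" using Xk_bounds by blast
  then show "closed_csubspace {h. (\<lambda>k. Xk k h) \<longlonglongrightarrow> 0}"
    by (intro closed_csubspace_tendsto_0 bounded_clinear_Xk)
  show "{h. (\<lambda>k. Xk k h) \<longlonglongrightarrow> 0} \<noteq> {0}" using assms(2) by blast
  show "{h. (\<lambda>k. Xk k h) \<longlonglongrightarrow> 0} \<noteq> UNIV" using assms(1) by blast
  show "adj (A i) m \<in> {h. (\<lambda>k. Xk k h) \<longlonglongrightarrow> 0}"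
    if "i \<in> I" "m \<in> {h. (\<lambda>k. Xk k h) \<longlonglongrightarrow> 0}" for i m
    using that pure_adj_invariant by simp
qed

lemma invariant_subspace_if_fixed_vector:
  assumes "phiA A I X \<noteq> X" "\<exists>h. h \<noteq> 0 \<and> (\<forall>k\<ge>1. Xk k h = X h)"
  shows "\<exists>S. closed_csubspace S \<and> S \<noteq> {0} \<and> S \<noteq> UNIV \<and> (\<forall>i\<in>I. A i ` S \<subseteq> S)"
proof (rule invariant_subspace_if_adj_invariant[OF bounded])
  let ?M = "{h. \<forall>k. Xk k h = X h}"
  have "?M = (\<Inter>k. {h. Xk k h - X h = 0})" by auto
  moreover have "closed_csubspace {h. Xk k h - X h = 0}" for k
    using positive_op_bounded_clinear[OF positive]
    by (intro closed_csubspace_kernel bounded_clinear_diff bounded_clinear_Xk)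
  ultimately show "closed_csubspace ?M" by (simp add: closed_csubspace_INT)
  obtain h where h: "h \<noteq> 0" "\<And>k. k \<ge> 1 \<Longrightarrow> Xk k h = X h" using assms(2) by blast
  have "Xk k h = X h" for k using h(2)[of k] by (cases k) auto
  with h(1) show "?M \<noteq> {0}" by blast
  show "?M \<noteq> UNIV"
  proof
    assume "?M = UNIV"
    then have "Xk 1 h = X h" for h by blast
    with assms(1) show False by auto
  qed
  show "adj (A i) m \<in> ?M" if "i \<in> I" "m \<in> ?M" for i m
    using that fixed_adj_invariant by simp
qed

end

theorem theorem4p3:
  fixes A :: "nat \<Rightarrow> 'a::chilbert \<Rightarrow> 'a"
    and I :: "nat set"
    and X :: "'a \<Rightarrow> 'a"
  assumes index: "(\<exists>n. I = {1..n}) \<or> I = {1..}"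
    and bounded: "\<forall>i\<in>I. bounded_clinear (A i)"
    and normal: "\<forall>h. (\<lambda>i. A i (adj (A i) h)) summable_on I"
    and Xpos: "positive_op X"
    and Xnz: "X \<noteq> (\<lambda>h. 0)"
    and Xsuper: "op_le (phiA A I X) X"
    and cases:
      "\<not> inj X
       \<or> ((\<not> (\<forall>h. (\<lambda>k. ((phiA A I ^^ k) X) h) \<longlonglongrightarrow> 0))
           \<and> (\<exists>h. h \<noteq> 0 \<and> (\<lambda>k. ((phiA A I ^^ k) X) h) \<longlonglongrightarrow> 0))
       \<or> (phiA A I X \<noteq> X
           \<and> (\<exists>h. h \<noteq> 0 \<and> (\<forall>k\<ge>1. ((phiA A I ^^ k) X) h = X h)))"
  shows "\<exists>S. closed_csubspace S \<and> S \<noteq> {0} \<and> S \<noteq> UNIV \<and> (\<forall>i\<in>I. A i ` S \<subseteq> S)"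
proof -
  interpret superharmonic A I X
    using bounded normal Xpos Xsuper by unfold_locales
  from cases show ?thesis
    using invariant_subspace_if_not_inj[OF Xnz] invariant_subspace_if_not_pure
      invariant_subspace_if_fixed_vector
    by blast
qed

end
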